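(* Let $\mathcal{P}$ be a locally finite poset and let $J$ and $\mu$ be as in the context. Then for every $(x,y,z)\in \mathcal{F}l^3(\mathcal{P})$ we have $$J(x,y,z)=\mu(x,y)\,\mu(y,z).$$
   Context: For a locally finite poset $\mathcal{P}$, let $\mathcal{F}l^2(\mathcal{P})=\{(x,y)\in\mathcal{P}^2: x\le y\}$ and $\mathcal{F}l^3(\mathcal{P})=\{(x,y,z)\in\mathcal{P}^3: x\le y\le z\}$. The Möbius function $\mu:\mathcal{F}l^2(\mathcal{P})\to\mathbb{Z}$ is defined by $\mu(x,x)=1$ and $\sum_{x\le a\le y}\mu(x,a)=0$ for $x<y$. Let $\delta_3(x,y,z)=1$ if $x=y=z$ and $0$ otherwise. The function $J:\mathcal{F}l^3(\mathcal{P})\to\mathbb{Z}$ is the unique function satisfying, for all $(x,y,z)\in\mathcal{F}l^3(\mathcal{P})$, $$\sum_{\substack{a,b\in\mathcal{P}\\ x\le a\le y\le b\le z}} J(a,y,b)=\delta_3(x,y,z).$$ *)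

theory Defs
  imports Main
begin

text \<open>A poset is modelled by a type of class order; local finiteness means every
closed interval is finite.\<close>
definition locally_finite_poset :: "'a::order itself \<Rightarrow> bool" where
  "locally_finite_poset _ \<longleftrightarrow> (\<forall>x y::'a. finite {x..y})"

text \<open>Defining property of the Moebius function on Fl^2 (values off Fl^2 irrelevant).\<close>
definition is_mobius :: "('a::order \<Rightarrow> 'a \<Rightarrow> int) \<Rightarrow> bool" where
  "is_mobius m \<longleftrightarrow> (\<forall>x. m x x = 1) \<and>
     (\<forall>x y. x < y \<longrightarrow> (\<Sum>a\<in>{x..y}. m x a) = 0)"

definition delta3 :: "'a \<Rightarrow> 'a \<Rightarrow> 'a \<Rightarrow> int" where
  "delta3 x y z = (if x = y \<and> y = z then 1 else 0)"

definition is_J :: "('a::order \<Rightarrow> 'a \<Rightarrow> 'a \<Rightarrow> int) \<Rightarrow> bool" where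
  "is_J j \<longleftrightarrow> (\<forall>x y z. x \<le> y \<and> y \<le> z \<longrightarrow>
      (\<Sum>a\<in>{x..y}. \<Sum>b\<in>{y..z}. j a y b) = delta3 x y z)"

end

theory Submission
  imports Defs
begin

text \<open>The product \<open>\<mu>(a,y) \<mu>(y,b)\<close> satisfies the defining identity of \<open>J\<close>:
its double sum factors into \<open>(\<Sum>\<^sub>a \<mu>(a,y)) (\<Sum>\<^sub>b \<mu>(y,b))\<close>, which is
\<open>\<delta>(x,y) \<delta>(y,z)\<close> by the two Moebius identities. Only the left one is part of the
definition of \<open>\<mu>\<close>; the right one follows by induction on \<open>[x,y]\<close>, evaluating the sum of
\<open>\<mu>(x,b) \<mu>(a,y)\<close> over \<open>x \<le> b \<le> a \<le> y\<close> in both orders. Conversely the identity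
determines \<open>J\<close>, by induction on \<open>|[x,y]| + |[y,z]|\<close>: \<open>J(x,y,z)\<close> is the only term of the
identity at \<open>(x,y,z)\<close> that is not indexed by smaller intervals.\<close>

lemma locally_finite_posetD:
  "locally_finite_poset TYPE('a::order) \<Longrightarrow> finite {x..y::'a}"
  unfolding locally_finite_poset_def by blast

lemma sum_interval_swap:
  fixes x y :: "'a::order"
  assumes "finite {x..y}"
  shows "(\<Sum>a\<in>{x..y}. \<Sum>b\<in>{x..a}. f a b) = (\<Sum>b\<in>{x..y}. \<Sum>a\<in>{b..y}. f a b)"
proof -
  have "(\<Sum>a\<in>{x..y}. \<Sum>b\<in>{x..a}. f a b) = (\<Sum>a\<in>{x..y}. \<Sum>b\<in>{b\<in>{x..y}. b \<le> a}. f a b)"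
    by (intro sum.cong) auto
  also have "\<dots> = (\<Sum>b\<in>{x..y}. \<Sum>a\<in>{a\<in>{x..y}. b \<le> a}. f a b)"
    by (rule sum.swap_restrict[OF assms assms])
  also have "\<dots> = (\<Sum>b\<in>{x..y}. \<Sum>a\<in>{b..y}. f a b)"
    by (intro sum.cong) auto
  finally show ?thesis .
qed

lemma is_mobius_sum_left:
  assumes "is_mobius mu" and "x \<le> y"
  shows "(\<Sum>a\<in>{x..y}. mu x a) = (if x = y then 1 else 0)"
  using assms unfolding is_mobius_def by (cases "x = y") auto

lemma is_mobius_sum_right:
  fixes mu :: "'a::order \<Rightarrow> 'a \<Rightarrow> int"
  assumes lf: "locally_finite_poset TYPE('a)" and mob: "is_mobius mu"
  shows "x \<le> y \<Longrightarrow> (\<Sum>a\<in>{x..y}. mu a y) = (if x = y then 1 else 0)"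
proof (induction "card {x..y}" arbitrary: x rule: less_induct)
  case less
  have fin: "finite {u..v}" for u v :: 'a
    using lf by (rule locally_finite_posetD)
  have diag: "mu u u = 1" for u
    using mob unfolding is_mobius_def by blast
  let ?R = "\<lambda>b. \<Sum>a\<in>{b..y}. mu a y"
  show ?case
  proof (cases "x = y")
    case True
    then show ?thesis using diag by simp
  next
    case False
    with less.prems have "x < y" by simp
    have IH: "?R b = (if b = y then 1 else 0)" if "b \<in> {x..y} - {x}" for b
    proof -
      have "{b..y} \<subset> {x..y}" using that by auto
      then have "card {b..y} < card {x..y}" by (rule psubset_card_mono[OF fin])
      then show ?thesis using less.hyps that by auto
    qed
    have "mu x y = (\<Sum>a\<in>{x..y}. if a = x then mu a y else 0)"
      using \<open>x < y\<close> fin by (simp add: less_imp_le)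
    also have "\<dots> = (\<Sum>a\<in>{x..y}. (\<Sum>b\<in>{x..a}. mu x b) * mu a y)"
      using is_mobius_sum_left[OF mob] by (intro sum.cong) auto
    also have "\<dots> = (\<Sum>b\<in>{x..y}. mu x b * ?R b)"
      using fin by (simp add: sum_distrib_right sum_distrib_left sum_interval_swap)
    also have "\<dots> = mu x x * ?R x + (\<Sum>b\<in>{x..y} - {x}. mu x b * ?R b)"
      using fin \<open>x < y\<close> by (subst sum.remove[of _ x]) auto
    also have "(\<Sum>b\<in>{x..y} - {x}. mu x b * ?R b) = (\<Sum>b\<in>{x..y} - {x}. if b = y then mu x y else 0)"
      using IH by (intro sum.cong) auto
    also have "\<dots> = mu x y"
      using fin \<open>x < y\<close> by auto
    finally show ?thesis using diag False by simp
  qed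
qed

lemma is_J_mobius_product:
  fixes mu :: "'a::order \<Rightarrow> 'a \<Rightarrow> int"
  assumes "locally_finite_poset TYPE('a)" and "is_mobius mu"
  shows "is_J (\<lambda>a b c. mu a b * mu b c)"
  unfolding is_J_def
proof (intro allI impI, elim conjE)
  fix x y z :: 'a
  assume "x \<le> y" "y \<le> z"
  have "(\<Sum>a\<in>{x..y}. \<Sum>b\<in>{y..z}. mu a y * mu y b) = (\<Sum>a\<in>{x..y}. mu a y) * (\<Sum>b\<in>{y..z}. mu y b)"
    by (simp add: sum_product)
  also have "\<dots> = delta3 x y z"
    using is_mobius_sum_right[OF assms \<open>x \<le> y\<close>] is_mobius_sum_left[OF assms(2) \<open>y \<le> z\<close>]
    unfolding delta3_def by simp
  finally show "(\<Sum>a\<in>{x..y}. \<Sum>b\<in>{y..z}. mu a y * mu y b) = delta3 x y z" .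
qed

lemma card_intervals_less:
  fixes x y z a b :: "'a::order"
  assumes "locally_finite_poset TYPE('a)"
    and "a \<in> {x..y}" "b \<in> {y..z}" "(a, b) \<noteq> (x, z)"
  shows "card {a..y} + card {y..b} < card {x..y} + card {y..z}"
proof -
  have fin: "finite {u..v}" for u v :: 'a
    using assms(1) by (rule locally_finite_posetD)
  have sub: "{a..y} \<subseteq> {x..y}" "{y..b} \<subseteq> {y..z}"
    using assms(2,3) by auto
  have "x \<notin> {a..y} \<or> z \<notin> {y..b}"
    using assms(2-4) by auto
  then have "{a..y} \<subset> {x..y} \<or> {y..b} \<subset> {y..z}"
    using sub assms(2,3) by auto
  moreover have "card {a..y} \<le> card {x..y}" "card {y..b} \<le> card {y..z}"
    using sub fin by (simp_all add: card_mono)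
  ultimately show ?thesis
    using fin psubset_card_mono by (metis add_le_less_mono add_less_le_mono)
qed

lemma is_J_unique:
  fixes J J' :: "'a::order \<Rightarrow> 'a \<Rightarrow> 'a \<Rightarrow> int"
  assumes lf: "locally_finite_poset TYPE('a)" and "is_J J" and "is_J J'"
  shows "x \<le> y \<Longrightarrow> y \<le> z \<Longrightarrow> J x y z = J' x y z"
proof (induction "card {x..y} + card {y..z}" arbitrary: x z rule: less_induct)
  case less
  have fin: "finite {u..v}" for u v :: 'a
    using lf by (rule locally_finite_posetD)
  let ?D = "\<lambda>a b. J a y b - J' a y b"
  have off_diagonal: "?D a b = 0" if "(a, b) \<in> {x..y} \<times> {y..z} - {(x, z)}" for a b
    using less.hyps[OF card_intervals_less[OF lf]] that by auto
  have "(\<Sum>a\<in>{x..y}. \<Sum>b\<in>{y..z}. ?D a b) = (\<Sum>(a, b)\<in>{x..y} \<times> {y..z}. ?D a b)"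
    by (simp add: sum.cartesian_product)
  also have "\<dots> = (\<Sum>(a, b)\<in>{(x, z)}. ?D a b)"
    by (rule sum.mono_neutral_right) (use fin less.prems off_diagonal in fastforce)+
  also have "\<dots> = ?D x z"
    by simp
  finally have "?D x z = (\<Sum>a\<in>{x..y}. \<Sum>b\<in>{y..z}. J a y b) - (\<Sum>a\<in>{x..y}. \<Sum>b\<in>{y..z}. J' a y b)"
    by (simp add: sum_subtractf)
  also have "\<dots> = 0"
    using assms(2,3) less.prems unfolding is_J_def by simp
  finally show ?case by simp
qed

theorem theorem5p2:
  fixes mu :: "'a::order \<Rightarrow> 'a \<Rightarrow> int" and J :: "'a \<Rightarrow> 'a \<Rightarrow> 'a \<Rightarrow> int"
  assumes "locally_finite_poset TYPE('a)"
    and "is_mobius mu"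
    and "is_J J"
    and "x \<le> y" and "y \<le> z"
  shows "J x y z = mu x y * mu y z"
  using is_J_unique[OF assms(1,3) is_J_mobius_product[OF assms(1,2)] assms(4,5)] .

end
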